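(* Let $k\in\mathbb{N}$, $C\ge0$, $z_1,\dots,z_k\ge1$, $\lambda_1,\dots,\lambda_k>0$ and $\mu_1,\dots,\mu_k>0$ with $Z=\mu_1z_1+\cdots+\mu_kz_k\ge\Lambda$. (a) If $\lambda_i<\mu_i$ for all $i$, then $$\sum_{\mathbf{r}\in\mathscr{H}^k_+(Z)}\left(1+\sum_{i=1}^k\lambda_ir_i-Z\right)^C\prod_{i=1}^k\frac{e^{-z_i}z_i^{r_i}}{r_i!}\ll_{k,\boldsymbol{\lambda},\boldsymbol{\mu},C}\mathrm{Prob}(\mathscr{H}^k(Z)).$$ (b) If $\log(\mu_i/\lambda_i)<\lambda_i$ for all $i$, then $$\sum_{\mathbf{r}\in\mathscr{H}^k_-(Z)}\left(1+Z-\sum_{i=1}^k\lambda_ir_i\right)^C\prod_{i=1}^k\frac{e^{-z_i}(e^{\lambda_i}z_i)^{r_i}}{r_i!}\ll_{k,\boldsymbol{\lambda},\boldsymbol{\mu},C}e^Z\,\mathrm{Prob}(\mathscr{H}^k(Z)).$$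
   Context: $\Lambda=\max_i\lambda_i$. $\mathrm{Prob}$ denotes the $k$-dimensional Poisson distribution with parameters $z_1,\dots,z_k$, giving $(r_1,\dots,r_k)\in(\mathbb{N}\cup\{0\})^k$ probability $\prod_ie^{-z_i}z_i^{r_i}/r_i!$. For $R\ge\Lambda$: $\mathscr{H}^k(R)=\{\mathbf{r}\in(\mathbb{N}\cup\{0\})^k: R-\Lambda<\sum_i\lambda_ir_i\le R\}$, $\mathscr{H}^k_-(R)=\{\mathbf{r}\in(\mathbb{N}\cup\{0\})^k:\sum_i\lambda_ir_i\le R\}$, $\mathscr{H}^k_+(R)=\{\mathbf{r}\in(\mathbb{N}\cup\{0\})^k:\sum_i\lambda_ir_i\ge R\}$. *)

theory Defs
  imports "HOL-Analysis.Analysis"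
begin

text \<open>Vectors in (N union {0})^k are represented as extensional functions on {..<k}.\<close>

definition lattice_pts :: "nat \<Rightarrow> (nat \<Rightarrow> nat) set" where
  "lattice_pts k = PiE {..<k} (\<lambda>_. UNIV)"

definition Lam :: "nat \<Rightarrow> (nat \<Rightarrow> real) \<Rightarrow> real" where
  "Lam k lam = Max (lam ` {..<k})"

definition lin :: "nat \<Rightarrow> (nat \<Rightarrow> real) \<Rightarrow> (nat \<Rightarrow> nat) \<Rightarrow> real" where
  "lin k lam r = (\<Sum>i<k. lam i * real (r i))"

definition Hk :: "nat \<Rightarrow> (nat \<Rightarrow> real) \<Rightarrow> real \<Rightarrow> (nat \<Rightarrow> nat) set" where
  "Hk k lam R = {r \<in> lattice_pts k. R - Lam k lam < lin k lam r \<and> lin k lam r \<le> R}"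

definition Hminus :: "nat \<Rightarrow> (nat \<Rightarrow> real) \<Rightarrow> real \<Rightarrow> (nat \<Rightarrow> nat) set" where
  "Hminus k lam R = {r \<in> lattice_pts k. lin k lam r \<le> R}"

definition Hplus :: "nat \<Rightarrow> (nat \<Rightarrow> real) \<Rightarrow> real \<Rightarrow> (nat \<Rightarrow> nat) set" where
  "Hplus k lam R = {r \<in> lattice_pts k. lin k lam r \<ge> R}"

definition poisson_wt :: "nat \<Rightarrow> (nat \<Rightarrow> real) \<Rightarrow> (nat \<Rightarrow> nat) \<Rightarrow> real" where
  "poisson_wt k z r = (\<Prod>i<k. exp (- z i) * z i ^ r i / fact (r i))"

definition Prob :: "nat \<Rightarrow> (nat \<Rightarrow> real) \<Rightarrow> (nat \<Rightarrow> nat) set \<Rightarrow> real" where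
  "Prob k z A = (\<Sum>\<^sub>\<infinity>r\<in>A. poisson_wt k z r)"

end

theory Submission
  imports Defs
begin

text \<open>
  For (a), start at \<open>r \<in> H\<^sub>+(Z)\<close> and repeatedly lower a coordinate with
  \<open>\<lambda>\<^sub>i r\<^sub>i > \<mu>\<^sub>i z\<^sub>i\<close>; such a coordinate exists while \<open>\<lambda>\<cdot>r > Z\<close>. Each step multiplies the
  Poisson weight by \<open>r\<^sub>i / z\<^sub>i \<ge> \<rho> = min \<mu>\<^sub>i / \<lambda>\<^sub>i > 1\<close> and lowers \<open>\<lambda>\<cdot>r\<close> by at most \<open>\<Lambda>\<close>,
  so the walk stops at some \<open>h \<in> H(Z)\<close> with \<open>h \<le> r\<close> and weight at least \<open>\<rho>\<^bsup>|r-h|\<^esup>\<close> times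
  that of \<open>r\<close>. Half of this gain absorbs the polynomial factor
  \<open>(1 + \<lambda>\<cdot>r - Z)\<^sup>C \<le> (1 + \<Lambda> |r-h|)\<^sup>C\<close>; since \<open>r \<mapsto> (h, r - h)\<close> is injective, the other
  half is a geometric series in \<open>r - h\<close> whose sum is a constant.

  For (b) the same walk runs upwards for the tilted weight \<open>e\<^bsup>\<lambda>\<cdot>r\<^esup> Prob(r)\<close>, whose
  step ratio \<open>e\<^bsup>\<lambda>\<^sub>i\<^esup> z\<^sub>i / (r\<^sub>i + 1)\<close> gains a uniform factor \<open>> 1\<close> once \<open>Z\<close> is large
  compared with \<open>k \<Lambda>\<close>; for bounded \<open>Z\<close> both sides are bounded above and below by constants.
\<close>

lemma sum_fun_upd_remove:
  assumes "finite A" "i \<in> A"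
  shows "(\<Sum>j\<in>A. f j ((r(i := m)) j)) = f i m + (\<Sum>j\<in>A - {i}. f j (r j))"
proof -
  have "(\<Sum>j\<in>A. f j ((r(i := m)) j)) = f i m + (\<Sum>j\<in>A - {i}. f j ((r(i := m)) j))"
    using assms by (subst sum.remove[of _ i]) auto
  also have "(\<Sum>j\<in>A - {i}. f j ((r(i := m)) j)) = (\<Sum>j\<in>A - {i}. f j (r j))"
    by (rule sum.cong) auto
  finally show ?thesis .
qed

lemma prod_fun_upd_remove:
  assumes "finite A" "i \<in> A"
  shows "(\<Prod>j\<in>A. f j ((r(i := m)) j)) = f i m * (\<Prod>j\<in>A - {i}. f j (r j))"
proof -
  have "(\<Prod>j\<in>A. f j ((r(i := m)) j)) = f i m * (\<Prod>j\<in>A - {i}. f j ((r(i := m)) j))"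
    using assms by (subst prod.remove[of _ i]) auto
  also have "(\<Prod>j\<in>A - {i}. f j ((r(i := m)) j)) = (\<Prod>j\<in>A - {i}. f j (r j))"
    by (rule prod.cong) auto
  finally show ?thesis .
qed

lemma power_div_fact_le_exp:
  fixes x :: real
  assumes "x \<ge> 0"
  shows "x ^ n / fact n \<le> exp x"
proof -
  have "(\<lambda>m. x ^ m / fact m) sums exp x"
    using exp_converges[of x] by (simp add: divide_inverse_commute)
  then show ?thesis
    using sum_le_suminf[of "\<lambda>m. x ^ m / fact m" "{n}"] assms by (auto simp: sums_iff)
qed

lemma powr_le_const_mult_power:
  fixes a t C :: real
  assumes "a \<ge> 0" "t > 1" "C \<ge> 0"
  shows "\<exists>A\<ge>0. \<forall>n. (1 + a + a * real n) powr C \<le> A * t ^ n"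
proof -
  define K where "K = nat \<lceil>C\<rceil>"
  define A where "A = (1 + a) ^ K * fact K * t / ln t ^ K"
  have lt: "ln t > 0" using assms by simp
  have "(1 + a + a * real n) powr C \<le> A * t ^ n" for n
  proof -
    have base: "1 \<le> 1 + a + a * real n" using assms by simp
    have "(1 + a + a * real n) powr C \<le> (1 + a + a * real n) ^ K"
      using base by (subst powr_realpow[symmetric]) (auto intro!: powr_mono simp: K_def, linarith)
    also have "\<dots> \<le> (1 + a) ^ K * (1 + real n) ^ K"
      using assms by (subst power_mult_distrib[symmetric], intro power_mono) (auto simp: algebra_simps)
    also have "(1 + real n) ^ K \<le> fact K * t / ln t ^ K * t ^ n"
    proof -
      have "((1 + real n) * ln t) ^ K / fact K \<le> exp ((1 + real n) * ln t)"
        using lt by (intro power_div_fact_le_exp) auto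
      also have "\<dots> = t * t ^ n"
        using assms by (simp add: algebra_simps exp_add exp_of_nat_mult)
      finally have "(1 + real n) ^ K * ln t ^ K \<le> t * t ^ n * fact K"
        by (simp add: pos_divide_le_eq power_mult_distrib)
      then show ?thesis
        using lt by (simp add: field_simps)
    qed
    finally show ?thesis
      using assms by (simp add: A_def mult_left_mono mult_ac)
  qed
  moreover have "A \<ge> 0" using assms lt by (simp add: A_def)
  ultimately show ?thesis by blast
qed

lemma finite_lower_bound_gt:
  fixes f :: "nat \<Rightarrow> real"
  assumes "\<forall>i<k. c < f i"
  shows "\<exists>m>c. \<forall>i<k. m \<le> f i"
proof (cases "k = 0")
  case False
  then have "c < Min (f ` {..<k})" using assms by (subst Min_gr_iff) auto
  then show ?thesis by (intro exI[of _ "Min (f ` {..<k})"]) auto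
qed (auto intro: exI[of _ "c + 1"])

section \<open>Lattice points, the linear form and Poisson weights\<close>

lemma fun_upd_in_lattice_pts: "r \<in> lattice_pts k \<Longrightarrow> i < k \<Longrightarrow> r(i := n) \<in> lattice_pts k"
  unfolding lattice_pts_def by (auto simp: PiE_iff extensional_def)

lemma restrict_in_lattice_pts: "restrict f {..<k} \<in> lattice_pts k"
  unfolding lattice_pts_def by auto

lemma lattice_pts_eq_restrictI:
  assumes "r \<in> lattice_pts k" "\<And>j. j < k \<Longrightarrow> r j = f j"
  shows "r = restrict f {..<k}"
  using assms unfolding lattice_pts_def by (auto simp: PiE_iff extensional_def)

lemma sum_PiE_prod_le_power:
  fixes p :: "nat \<Rightarrow> nat \<Rightarrow> real"
  assumes "finite G" "G \<subseteq> lattice_pts k" "\<And>i n. i < k \<Longrightarrow> p i n \<ge> 0"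
    and "\<And>i N. i < k \<Longrightarrow> (\<Sum>n\<le>N. p i n) \<le> c"
  shows "(\<Sum>r\<in>G. \<Prod>i<k. p i (r i)) \<le> c ^ k"
proof -
  define N where "N = (\<Sum>r\<in>G. \<Sum>i<k. r i)"
  have "r i \<le> N" if "r \<in> G" "i < k" for r i
  proof -
    have "r i \<le> (\<Sum>i<k. r i)" using that by (intro member_le_sum) auto
    also have "\<dots> \<le> N" unfolding N_def using that assms(1)
      by (intro member_le_sum[where f="\<lambda>r. \<Sum>i<k. r i"]) auto
    finally show ?thesis .
  qed
  then have "G \<subseteq> PiE {..<k} (\<lambda>_. {..N})"
    using assms(2) unfolding lattice_pts_def by (auto simp: PiE_iff)
  then have "(\<Sum>r\<in>G. \<Prod>i<k. p i (r i)) \<le> (\<Sum>r\<in>PiE {..<k} (\<lambda>_. {..N}). \<Prod>i<k. p i (r i))"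
    using assms(3) by (intro sum_mono2) (auto simp: finite_PiE PiE_iff intro!: prod_nonneg)
  also have "\<dots> = (\<Prod>i<k. \<Sum>n\<le>N. p i n)"
    by (subst prod_sum_PiE) auto
  also have "\<dots> \<le> (\<Prod>i<k. c)"
    using assms(3,4) by (intro prod_mono) (auto intro!: sum_nonneg)
  finally show ?thesis by simp
qed

lemma sum_geometric_weights_le:
  fixes t :: real
  assumes "t > 1" "finite G" "G \<subseteq> lattice_pts k"
  shows "(\<Sum>d\<in>G. (1/t) ^ (\<Sum>i<k. d i)) \<le> (1 / (1 - 1/t)) ^ k"
proof -
  have "(\<lambda>n. (1/t) ^ n) sums (1 / (1 - 1/t))" using assms by (intro geometric_sums) auto
  then have "(\<Sum>n\<le>N. (1/t) ^ n) \<le> 1 / (1 - 1/t)" for N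
    using sum_le_suminf[of "\<lambda>n. (1/t) ^ n" "{..N}"] assms by (auto simp: sums_iff)
  then have "(\<Sum>d\<in>G. \<Prod>i<k. (1/t) ^ d i) \<le> (1 / (1 - 1/t)) ^ k"
    using assms by (intro sum_PiE_prod_le_power) auto
  then show ?thesis by (simp add: power_sum)
qed

lemma lin_fun_upd_Suc:
  assumes "i < k"
  shows "lin k lam (r(i := Suc n)) = lin k lam (r(i := n)) + lam i"
proof -
  have i: "i \<in> {..<k}" using assms by simp
  show ?thesis
    unfolding lin_def sum_fun_upd_remove[OF finite_lessThan i, of "\<lambda>j x. lam j * real x"]
    by (simp add: algebra_simps)
qed

lemma lin_nonneg: "\<forall>i<k. 0 \<le> lam i \<Longrightarrow> 0 \<le> lin k lam r"
  unfolding lin_def by (intro sum_nonneg) auto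

lemma lin_ge_mult_sum:
  assumes "\<forall>i<k. m \<le> lam i"
  shows "m * real (\<Sum>i<k. r i) \<le> lin k lam r"
  unfolding lin_def sum_distrib_left of_nat_sum using assms
  by (intro sum_mono mult_right_mono) auto

lemma lin_diff_le:
  assumes "\<forall>i<k. h i \<le> r i" "\<forall>i<k. lam i \<le> La"
  shows "lin k lam r - lin k lam h \<le> La * real (\<Sum>i<k. r i - h i)"
proof -
  have "lin k lam r - lin k lam h = (\<Sum>i<k. lam i * real (r i - h i))"
    unfolding lin_def using assms(1) by (simp add: sum_subtractf[symmetric] algebra_simps of_nat_diff)
  also have "\<dots> \<le> (\<Sum>i<k. La * real (r i - h i))"
    using assms by (intro sum_mono mult_right_mono) auto
  finally show ?thesis by (simp add: sum_distrib_left)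
qed

lemma lam_le_Lam: "i < k \<Longrightarrow> lam i \<le> Lam k lam"
  unfolding Lam_def by auto

lemma Lam_attained: "k \<ge> 1 \<Longrightarrow> \<exists>i<k. Lam k lam = lam i"
proof -
  assume "k \<ge> 1"
  then have "Lam k lam \<in> lam ` {..<k}"
    unfolding Lam_def by (intro Max_in) (auto simp: lessThan_empty_iff)
  then show ?thesis by auto
qed

lemma Lam_pos:
  assumes "k \<ge> 1" "\<forall>i<k. lam i > 0"
  shows "Lam k lam > 0"
  using Lam_attained[OF assms(1), of lam] assms(2) by auto

lemma Hk_nonempty:
  assumes "k \<ge> 1" "\<forall>i<k. lam i > 0" "Lam k lam \<le> Z"
  shows "Hk k lam Z \<noteq> {}"
proof -
  obtain i where i: "i < k" "Lam k lam = lam i" using Lam_attained[OF assms(1)] by blast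
  define La where "La = Lam k lam"
  have La: "La > 0" using i assms(2) by (simp add: La_def)
  define m where "m = nat \<lfloor>Z / La\<rfloor>"
  have "1 \<le> Z / La" using assms(3) La by (simp add: La_def)
  then have m: "Z / La - 1 < real m" "real m \<le> Z / La"
    unfolding m_def by linarith+
  define h where "h = restrict (\<lambda>j. if j = i then m else 0) {..<k}"
  have "lin k lam h = (\<Sum>j<k. if j = i then La * real m else 0)"
    unfolding lin_def h_def La_def using i by (intro sum.cong) auto
  also have "\<dots> = La * real m" using i by simp
  finally have "h \<in> Hk k lam Z"
    using m La unfolding Hk_def La_def[symmetric] h_def
    by (auto simp: restrict_in_lattice_pts field_simps)
  then show ?thesis by blast
qed

lemma poisson_wt_nonneg: "\<forall>i<k. 0 \<le> z i \<Longrightarrow> 0 \<le> poisson_wt k z r"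
  unfolding poisson_wt_def by (intro prod_nonneg) auto

lemma poisson_wt_fun_upd_Suc:
  assumes "i < k"
  shows "real (Suc n) * poisson_wt k z (r(i := Suc n)) = z i * poisson_wt k z (r(i := n))"
proof -
  have i: "i \<in> {..<k}" using assms by simp
  show ?thesis
    unfolding poisson_wt_def
      prod_fun_upd_remove[OF finite_lessThan i, of "\<lambda>j x. exp (- z j) * z j ^ x / fact x"]
    by (simp add: divide_simps)
qed

lemma sum_poisson_wt_le_1:
  assumes "\<forall>i<k. 0 \<le> z i" "finite G" "G \<subseteq> lattice_pts k"
  shows "sum (poisson_wt k z) G \<le> 1"
proof -
  have "(\<Sum>n\<le>N. exp (- z i) * z i ^ n / fact n) \<le> 1" if "i < k" for i N
  proof -
    have "(\<lambda>n. exp (- z i) * (z i ^ n /\<^sub>R fact n)) sums (exp (- z i) * exp (z i))"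
      by (intro sums_mult exp_converges)
    then have "(\<lambda>n. exp (- z i) * z i ^ n / fact n) sums 1"
      by (simp add: exp_minus field_simps)
    then show ?thesis
      using sum_le_suminf[of "\<lambda>n. exp (- z i) * z i ^ n / fact n" "{..N}"] assms(1) that
      by (auto simp: sums_iff)
  qed
  then have "sum (poisson_wt k z) G \<le> 1 ^ k"
    unfolding poisson_wt_def using assms by (intro sum_PiE_prod_le_power) auto
  then show ?thesis by simp
qed

lemma poisson_wt_summable_on:
  assumes "\<forall>i<k. 0 \<le> z i" "A \<subseteq> lattice_pts k"
  shows "poisson_wt k z summable_on A"
  using assms sum_poisson_wt_le_1[OF assms(1)]
  by (intro nonneg_bdd_above_summable_on bdd_aboveI2[where M=1])
     (auto intro: poisson_wt_nonneg)

lemma poisson_wt_ge: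
  assumes "\<forall>i<k. 1 \<le> z i" "\<forall>i<k. h i \<le> M"
  shows "exp (- (\<Sum>i<k. z i)) / fact M ^ k \<le> poisson_wt k z h"
proof -
  have "exp (- (\<Sum>i<k. z i)) / fact M ^ k = (\<Prod>i<k. exp (- z i) * 1 / fact M)"
    by (simp add: prod_dividef exp_sum sum_negf[symmetric])
  also have "\<dots> \<le> poisson_wt k z h"
    unfolding poisson_wt_def using assms
    by (intro prod_mono conjI mult_left_mono frac_le one_le_power fact_mono) auto
  finally show ?thesis .
qed

lemma tilted_poisson_eq:
  "(\<Prod>i<k. exp (- z i) * (exp (lam i) * z i) ^ r i / fact (r i))
     = exp (lin k lam r) * poisson_wt k z r"
proof -
  have "(\<Prod>i<k. exp (- z i) * (exp (lam i) * z i) ^ r i / fact (r i))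
      = (\<Prod>i<k. exp (lam i * real (r i)) * (exp (- z i) * z i ^ r i / fact (r i)))"
    by (intro prod.cong refl) (simp add: power_mult_distrib exp_of_nat_mult[symmetric] mult_ac)
  then show ?thesis
    unfolding poisson_wt_def lin_def prod.distrib exp_sum[OF finite_lessThan] by simp
qed

lemma poisson_wt_fun_upd_pred_ge:
  assumes i: "i < k" and z: "\<forall>j<k. 0 < z j" and r: "0 < r i" "\<theta> * z i \<le> real (r i)"
  shows "\<theta> * poisson_wt k z r \<le> poisson_wt k z (r(i := r i - 1))"
proof -
  define r' where "r' = r(i := r i - 1)"
  have "Suc (r' i) = r i" "r'(i := r i) = r" using r(1) by (auto simp: r'_def)
  then have P_r: "real (r i) * poisson_wt k z r = z i * poisson_wt k z r'"
    using poisson_wt_fun_upd_Suc[OF i, of "r' i" z r'] by simp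
  have "\<theta> * z i * poisson_wt k z r \<le> real (r i) * poisson_wt k z r"
    using r(2) z by (intro mult_right_mono poisson_wt_nonneg) (auto simp: less_imp_le)
  then have "z i * (\<theta> * poisson_wt k z r) \<le> z i * poisson_wt k z r'"
    unfolding P_r by (simp add: mult_ac)
  then show ?thesis using z i unfolding r'_def by simp
qed

lemma tilted_poisson_fun_upd_Suc_ge:
  assumes i: "i < k" and z: "\<forall>j<k. 0 \<le> z j" and \<theta>: "\<theta> * real (Suc (r i)) \<le> exp (lam i) * z i"
  shows "\<theta> * (exp (lin k lam r) * poisson_wt k z r)
           \<le> exp (lin k lam (r(i := Suc (r i)))) * poisson_wt k z (r(i := Suc (r i)))"
proof -
  define r' where "r' = r(i := Suc (r i))"
  have P_r': "real (Suc (r i)) * poisson_wt k z r' = z i * poisson_wt k z r"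
    using poisson_wt_fun_upd_Suc[OF i, of "r i" z r] by (simp add: r'_def)
  have "\<theta> * real (Suc (r i)) * poisson_wt k z r \<le> exp (lam i) * z i * poisson_wt k z r"
    using \<theta> z by (intro mult_right_mono poisson_wt_nonneg)
  also have "\<dots> = real (Suc (r i)) * (exp (lam i) * poisson_wt k z r')"
    by (simp only: P_r' mult.assoc mult.left_commute)
  finally have "real (Suc (r i)) * (\<theta> * poisson_wt k z r)
      \<le> real (Suc (r i)) * (exp (lam i) * poisson_wt k z r')"
    by (simp only: mult_ac)
  then have "exp (lin k lam r) * (\<theta> * poisson_wt k z r)
      \<le> exp (lin k lam r) * (exp (lam i) * poisson_wt k z r')"
    by (intro mult_left_mono) (simp_all del: of_nat_Suc)
  then show ?thesis
    using lin_fun_upd_Suc[OF i, of lam r "r i"] by (simp add: r'_def exp_add mult_ac)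
qed

section \<open>Monotone walks and summation over a decomposition\<close>

lemma lattice_descent:
  fixes W :: "(nat \<Rightarrow> nat) \<Rightarrow> real"
  assumes "\<theta> \<ge> 0"
    and step: "\<And>r. r \<in> S \<Longrightarrow> r \<notin> T \<Longrightarrow>
      \<exists>i<k. 0 < r i \<and> r(i := r i - 1) \<in> S \<and> \<theta> * W r \<le> W (r(i := r i - 1))"
    and "r \<in> S"
  shows "\<exists>h\<in>T. (\<forall>i<k. h i \<le> r i) \<and> \<theta> ^ (\<Sum>i<k. r i - h i) * W r \<le> W h"
  using assms(3)
proof (induction "\<Sum>i<k. r i" arbitrary: r rule: less_induct)
  case less
  show ?case
  proof (cases "r \<in> T")
    case False
    then obtain i where i: "i < k" "0 < r i" and r'S: "r(i := r i - 1) \<in> S"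
      and W: "\<theta> * W r \<le> W (r(i := r i - 1))"
      using step less.prems by blast
    define r' where "r' = r(i := r i - 1)"
    have iK: "i \<in> {..<k}" using i by simp
    have split: "(\<Sum>j<k. f j (r j)) = f i (r i) + (\<Sum>j\<in>{..<k}-{i}. f j (r j))"
      "(\<Sum>j<k. f j (r' j)) = f i (r i - 1) + (\<Sum>j\<in>{..<k}-{i}. f j (r j))" for f :: "nat \<Rightarrow> nat \<Rightarrow> nat"
      using iK by (simp_all add: sum.remove r'_def sum_fun_upd_remove[OF finite_lessThan iK])
    have "(\<Sum>j<k. r' j) < (\<Sum>j<k. r j)"
      using split[of "\<lambda>_ x. x"] i by simp
    then obtain h where h: "h \<in> T" "\<forall>j<k. h j \<le> r' j"
      and hW: "\<theta> ^ (\<Sum>j<k. r' j - h j) * W r' \<le> W h"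
      using less.hyps r'S unfolding r'_def by blast
    have hle: "\<forall>j<k. h j \<le> r j"
      using h(2) unfolding r'_def by (metis diff_le_self fun_upd_apply le_trans)
    have "h i \<le> r i - 1" using h(2) i unfolding r'_def by auto
    then have s: "(\<Sum>j<k. r j - h j) = Suc (\<Sum>j<k. r' j - h j)"
      using split[of "\<lambda>j x. x - h j"] i by simp
    have "\<theta> ^ (\<Sum>j<k. r j - h j) * W r = \<theta> ^ (\<Sum>j<k. r' j - h j) * (\<theta> * W r)"
      by (simp add: s)
    also have "\<dots> \<le> \<theta> ^ (\<Sum>j<k. r' j - h j) * W r'"
      using W assms(1) unfolding r'_def by (intro mult_left_mono) auto
    finally show ?thesis using h(1) hle hW by auto
  qed auto
qed

lemma lattice_ascent:
  fixes W :: "(nat \<Rightarrow> nat) \<Rightarrow> real"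
  assumes "\<theta> \<ge> 0"
    and bounded: "\<And>r. r \<in> S \<Longrightarrow> (\<Sum>i<k. r i) \<le> N"
    and step: "\<And>r. r \<in> S \<Longrightarrow> r \<notin> T \<Longrightarrow>
      \<exists>i<k. r(i := Suc (r i)) \<in> S \<and> \<theta> * W r \<le> W (r(i := Suc (r i)))"
    and "r \<in> S"
  shows "\<exists>h\<in>T. (\<forall>i<k. r i \<le> h i) \<and> \<theta> ^ (\<Sum>i<k. h i - r i) * W r \<le> W h"
  using assms(4)
proof (induction "N - (\<Sum>i<k. r i)" arbitrary: r rule: less_induct)
  case less
  show ?case
  proof (cases "r \<in> T")
    case False
    then obtain i where i: "i < k" and r'S: "r(i := Suc (r i)) \<in> S"
      and W: "\<theta> * W r \<le> W (r(i := Suc (r i)))"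
      using step less.prems by blast
    define r' where "r' = r(i := Suc (r i))"
    have iK: "i \<in> {..<k}" using i by simp
    have split: "(\<Sum>j<k. f j (r j)) = f i (r i) + (\<Sum>j\<in>{..<k}-{i}. f j (r j))"
      "(\<Sum>j<k. f j (r' j)) = f i (Suc (r i)) + (\<Sum>j\<in>{..<k}-{i}. f j (r j))" for f :: "nat \<Rightarrow> nat \<Rightarrow> nat"
      using iK by (simp_all add: sum.remove r'_def sum_fun_upd_remove[OF finite_lessThan iK])
    have "N - (\<Sum>j<k. r' j) < N - (\<Sum>j<k. r j)"
      using split[of "\<lambda>_ x. x"] bounded[OF r'S] unfolding r'_def[symmetric] by simp
    then obtain h where h: "h \<in> T" "\<forall>j<k. r' j \<le> h j"
      and hW: "\<theta> ^ (\<Sum>j<k. h j - r' j) * W r' \<le> W h"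
      using less.hyps r'S unfolding r'_def by blast
    have hle: "\<forall>j<k. r j \<le> h j"
      using h(2) unfolding r'_def by (metis fun_upd_apply le_SucI le_trans order_refl)
    have "Suc (r i) \<le> h i" using h(2) i unfolding r'_def by auto
    then have s: "(\<Sum>j<k. h j - r j) = Suc (\<Sum>j<k. h j - r' j)"
      using split[of "\<lambda>j x. h j - x"] by simp
    have "\<theta> ^ (\<Sum>j<k. h j - r j) * W r = \<theta> ^ (\<Sum>j<k. h j - r' j) * (\<theta> * W r)"
      by (simp add: s)
    also have "\<dots> \<le> \<theta> ^ (\<Sum>j<k. h j - r' j) * W r'"
      using W assms(1) unfolding r'_def by (intro mult_left_mono) auto
    finally show ?thesis using h(1) hle hW by auto
  qed auto
qed

lemma decomposition_infsum_le:
  fixes g q w :: "_ \<Rightarrow> real"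
  assumes g: "\<And>r. r \<in> A \<Longrightarrow> 0 \<le> g r" and q: "\<And>h. h \<in> H \<Longrightarrow> 0 \<le> q h" "q summable_on H"
    and w: "\<And>d. d \<in> D \<Longrightarrow> 0 \<le> w d" "\<And>G. finite G \<Longrightarrow> G \<subseteq> D \<Longrightarrow> sum w G \<le> S"
    and "B \<ge> 0"
    and dec: "\<And>r. r \<in> A \<Longrightarrow> \<exists>h\<in>H. \<exists>d\<in>D. r = comb h d \<and> g r \<le> B * w d * q h"
  shows "g summable_on A \<and> infsum g A \<le> B * S * infsum q H"
proof -
  obtain \<phi> \<delta> where \<phi>\<delta>: "\<And>r. r \<in> A \<Longrightarrow>
      \<phi> r \<in> H \<and> \<delta> r \<in> D \<and> r = comb (\<phi> r) (\<delta> r) \<and> g r \<le> B * w (\<delta> r) * q (\<phi> r)"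
    using dec by metis
  have partial: "sum g F \<le> B * S * infsum q H" if F: "finite F" "F \<subseteq> A" for F
  proof -
    have inj: "inj_on (\<lambda>r. (\<phi> r, \<delta> r)) F"
      using F \<phi>\<delta> by (intro inj_onI) (metis Pair_inject subsetD)
    have "sum g F \<le> (\<Sum>r\<in>F. B * w (\<delta> r) * q (\<phi> r))"
      using \<phi>\<delta> F by (intro sum_mono) auto
    also have "\<dots> = (\<Sum>(h, d)\<in>(\<lambda>r. (\<phi> r, \<delta> r)) ` F. B * w d * q h)"
      by (simp add: sum.reindex[OF inj])
    also have "\<dots> \<le> (\<Sum>(h, d)\<in>\<phi> ` F \<times> \<delta> ` F. B * w d * q h)"
      using F \<phi>\<delta> \<open>B \<ge> 0\<close> w q by (intro sum_mono2) (auto intro!: mult_nonneg_nonneg)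
    also have "\<dots> = B * ((\<Sum>h\<in>\<phi> ` F. q h) * (\<Sum>d\<in>\<delta> ` F. w d))"
      by (simp add: sum.cartesian_product[symmetric] sum_distrib_left sum_distrib_right mult_ac
          sum.swap[of _ "\<delta> ` F"])
    also have "\<dots> \<le> B * (infsum q H * S)"
      using F \<phi>\<delta> \<open>B \<ge> 0\<close> w q
      by (intro mult_left_mono mult_mono finite_sum_le_infsum infsum_nonneg sum_nonneg w(2)) auto
    finally show ?thesis by (simp add: mult_ac)
  qed
  have "g summable_on A"
    using g partial by (intro nonneg_bdd_above_summable_on) (auto intro!: bdd_aboveI2)
  with partial show ?thesis by (auto intro: infsum_le_finite_sums)
qed

lemma geometric_decomposition_infsum_le:
  fixes g q :: "_ \<Rightarrow> real" and t :: real
  assumes "t > 1" "B \<ge> 0"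
    and "\<And>r. r \<in> A \<Longrightarrow> 0 \<le> g r" "\<And>h. h \<in> H \<Longrightarrow> 0 \<le> q h" "q summable_on H"
    and "\<And>r. r \<in> A \<Longrightarrow> \<exists>h\<in>H. \<exists>d\<in>lattice_pts k.
           r = comb h d \<and> g r \<le> B * (1/t) ^ (\<Sum>i<k. d i) * q h"
  shows "g summable_on A \<and> infsum g A \<le> B * (1 / (1 - 1/t)) ^ k * infsum q H"
  by (rule decomposition_infsum_le[where w="\<lambda>d. (1/t) ^ (\<Sum>i<k. d i)" and D="lattice_pts k"])
     (use assms sum_geometric_weights_le[OF assms(1)] in auto)

section \<open>The upper tail\<close>

lemma Hplus_descent_step:
  assumes lam: "\<forall>i<k. lam i > 0" and z: "\<forall>i<k. z i > 0"
    and \<theta>: "\<theta> \<ge> 0" "\<forall>i<k. \<theta> * lam i \<le> mu i"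
    and Z: "Z = (\<Sum>i<k. mu i * z i)" and rZ: "Z < lin k lam r"
  shows "\<exists>i<k. 0 < r i \<and> lin k lam (r(i := r i - 1)) + lam i = lin k lam r \<and>
           \<theta> * poisson_wt k z r \<le> poisson_wt k z (r(i := r i - 1))"
proof -
  have "\<not> (\<forall>i<k. lam i * real (r i) \<le> mu i * z i)"
  proof
    assume "\<forall>i<k. lam i * real (r i) \<le> mu i * z i"
    then have "lin k lam r \<le> Z" unfolding lin_def Z by (intro sum_mono) auto
    with rZ show False by simp
  qed
  then obtain i where i: "i < k" "mu i * z i < lam i * real (r i)"
    by (auto simp: not_le)
  have lam_i: "0 < lam i" and z_i: "0 < z i" and \<theta>_i: "\<theta> * lam i \<le> mu i"
    using lam z \<theta>(2) i(1) by auto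
  have less: "\<theta> * z i * lam i < real (r i) * lam i"
    using i(2) mult_right_mono[OF \<theta>_i less_imp_le[OF z_i]] by (simp add: mult_ac)
  then have "\<theta> * z i \<le> real (r i)" using lam_i by simp
  moreover have "0 \<le> \<theta> * z i * lam i" using \<theta>(1) z_i lam_i by simp
  then have ri: "0 < r i" using less by (cases "r i = 0") auto
  moreover have "lin k lam (r(i := r i - 1)) + lam i = lin k lam r"
    using lin_fun_upd_Suc[OF i(1), of lam r "r i - 1"] ri by simp
  ultimately show ?thesis using poisson_wt_fun_upd_pred_ge[OF i(1) z] i(1) by blast
qed

lemma Hplus_descends_to_Hk:
  assumes k: "k \<ge> 1" and lam: "\<forall>i<k. lam i > 0" and z: "\<forall>i<k. z i > 0"
    and \<theta>: "\<theta> \<ge> 0" "\<forall>i<k. \<theta> * lam i \<le> mu i"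
    and Z: "Z = (\<Sum>i<k. mu i * z i)" and r: "r \<in> Hplus k lam Z"
  shows "\<exists>h\<in>Hk k lam Z. (\<forall>i<k. h i \<le> r i) \<and>
           \<theta> ^ (\<Sum>i<k. r i - h i) * poisson_wt k z r \<le> poisson_wt k z h"
proof -
  define S where "S = {r \<in> lattice_pts k. Z - Lam k lam < lin k lam r}"
  have "\<exists>i<k. 0 < r i \<and> r(i := r i - 1) \<in> S \<and>
      \<theta> * poisson_wt k z r \<le> poisson_wt k z (r(i := r i - 1))"
    if "r \<in> S" "r \<notin> Hk k lam Z" for r
  proof -
    from that have rL: "r \<in> lattice_pts k" and rZ: "Z < lin k lam r"
      unfolding S_def Hk_def by auto
    then obtain i where i: "i < k" "0 < r i" "lin k lam (r(i := r i - 1)) + lam i = lin k lam r"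
      and "\<theta> * poisson_wt k z r \<le> poisson_wt k z (r(i := r i - 1))"
      using Hplus_descent_step[OF lam z \<theta> Z] by blast
    moreover have "r(i := r i - 1) \<in> S"
      using i rZ lam_le_Lam[OF i(1), of lam] rL unfolding S_def
      by (auto intro: fun_upd_in_lattice_pts)
    ultimately show ?thesis by blast
  qed
  moreover have "r \<in> S" using r Lam_pos[OF k lam] unfolding S_def Hplus_def by auto
  ultimately show ?thesis by (rule lattice_descent[OF \<theta>(1)])
qed

lemma Hplus_term_le:
  assumes k: "k \<ge> 1" and lam: "\<forall>i<k. lam i > 0" and z: "\<forall>i<k. z i > 0"
    and t: "t > 1" "\<forall>i<k. t * t * lam i \<le> mu i" and C: "C \<ge> 0"
    and A: "A \<ge> 0" "\<forall>n. (1 + Lam k lam + Lam k lam * real n) powr C \<le> A * t ^ n"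
    and Z: "Z = (\<Sum>i<k. mu i * z i)" and r: "r \<in> Hplus k lam Z"
  shows "\<exists>h\<in>Hk k lam Z. (\<forall>i<k. h i \<le> r i) \<and>
           (1 + lin k lam r - Z) powr C * poisson_wt k z r
             \<le> A * (1/t) ^ (\<Sum>i<k. r i - h i) * poisson_wt k z h"
proof -
  define La where "La = Lam k lam"
  have La: "La > 0" "\<forall>i<k. lam i \<le> La"
    using Lam_pos[OF k lam] lam_le_Lam unfolding La_def by auto
  obtain h where h: "h \<in> Hk k lam Z" "\<forall>i<k. h i \<le> r i"
    and hP: "(t * t) ^ (\<Sum>i<k. r i - h i) * poisson_wt k z r \<le> poisson_wt k z h"
    using Hplus_descends_to_Hk[OF k lam z _ t(2) Z r] t(1) by auto
  define s where "s = (\<Sum>i<k. r i - h i)"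
  have "lin k lam r - Z \<le> lin k lam r - lin k lam h" using h(1) by (simp add: Hk_def)
  also have "\<dots> \<le> La * real s" unfolding s_def using lin_diff_le h(2) La(2) by blast
  finally have "(1 + lin k lam r - Z) powr C \<le> (1 + La + La * real s) powr C"
    using r La C by (intro powr_mono2) (auto simp: Hplus_def)
  also have "\<dots> \<le> A * t ^ s" using A(2) unfolding La_def by blast
  finally have "(1 + lin k lam r - Z) powr C * poisson_wt k z r \<le> A * t ^ s * poisson_wt k z r"
    using z by (intro mult_right_mono poisson_wt_nonneg) (auto simp: less_imp_le)
  also have "\<dots> = A * (1/t) ^ s * ((t * t) ^ s * poisson_wt k z r)"
    using t(1) by (simp add: power_mult_distrib power_one_over)
  also have "\<dots> \<le> A * (1/t) ^ s * poisson_wt k z h"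
    using hP A(1) t(1) unfolding s_def by (intro mult_left_mono) auto
  finally show ?thesis using h unfolding s_def by blast
qed

lemma Hplus_weighted_sum_le:
  assumes k: "k \<ge> 1" and lam: "\<forall>i<k. lam i > 0" and z: "\<forall>i<k. z i > 0"
    and t: "t > 1" "\<forall>i<k. t * t * lam i \<le> mu i" and C: "C \<ge> 0"
    and A: "A \<ge> 0" "\<forall>n. (1 + Lam k lam + Lam k lam * real n) powr C \<le> A * t ^ n"
    and Z: "Z = (\<Sum>i<k. mu i * z i)"
  shows "(\<lambda>r. (1 + lin k lam r - Z) powr C * poisson_wt k z r) summable_on Hplus k lam Z \<and>
         (\<Sum>\<^sub>\<infinity>r\<in>Hplus k lam Z. (1 + lin k lam r - Z) powr C * poisson_wt k z r)
           \<le> A * (1 / (1 - 1/t)) ^ k * Prob k z (Hk k lam Z)"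
  unfolding Prob_def
proof (rule geometric_decomposition_infsum_le[where comb="\<lambda>h d. restrict (\<lambda>j. h j + d j) {..<k}"])
  have z0: "\<forall>i<k. 0 \<le> z i" using z by (simp add: less_imp_le)
  show "t > 1" "A \<ge> 0" by (fact t(1) A(1))+
  show "0 \<le> (1 + lin k lam r - Z) powr C * poisson_wt k z r" "0 \<le> poisson_wt k z r" for r
    using z0 by (simp_all add: poisson_wt_nonneg)
  show "poisson_wt k z summable_on Hk k lam Z"
    using z0 by (rule poisson_wt_summable_on) (auto simp: Hk_def)
  fix r assume r: "r \<in> Hplus k lam Z"
  then obtain h where h: "h \<in> Hk k lam Z" "\<forall>i<k. h i \<le> r i"
    and bound: "(1 + lin k lam r - Z) powr C * poisson_wt k z r
                  \<le> A * (1/t) ^ (\<Sum>i<k. r i - h i) * poisson_wt k z h"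
    using Hplus_term_le[OF k lam z t C A Z] by blast
  define d where "d = restrict (\<lambda>j. r j - h j) {..<k}"
  have "r = restrict (\<lambda>j. h j + d j) {..<k}"
    using h(2) r by (intro lattice_pts_eq_restrictI) (auto simp: d_def Hplus_def)
  moreover have "(\<Sum>i<k. d i) = (\<Sum>i<k. r i - h i)" by (simp add: d_def)
  moreover have "d \<in> lattice_pts k" unfolding d_def by (rule restrict_in_lattice_pts)
  ultimately show "\<exists>h\<in>Hk k lam Z. \<exists>d\<in>lattice_pts k. r = restrict (\<lambda>j. h j + d j) {..<k} \<and>
      (1 + lin k lam r - Z) powr C * poisson_wt k z r \<le> A * (1/t) ^ (\<Sum>i<k. d i) * poisson_wt k z h"
    using h(1) bound by (intro bexI[of _ h] bexI[of _ d] conjI) auto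
qed

lemma Hplus_bound_uniform:
  fixes k :: nat and C :: real and lam mu :: "nat \<Rightarrow> real"
  assumes k: "k \<ge> 1" and C: "C \<ge> 0" and lam: "\<forall>i<k. lam i > 0" and lam_mu: "\<forall>i<k. lam i < mu i"
  shows "\<exists>K::real. \<forall>z::nat \<Rightarrow> real.
           (\<forall>i<k. z i \<ge> 1) \<longrightarrow> (\<Sum>i<k. mu i * z i) \<ge> Lam k lam \<longrightarrow>
           (let Z = (\<Sum>i<k. mu i * z i);
                f = (\<lambda>r. (1 + lin k lam r - Z) powr C * (\<Prod>i<k. exp (- z i) * z i ^ r i / fact (r i)))
            in f summable_on Hplus k lam Z \<and>
               (\<Sum>\<^sub>\<infinity>r\<in>Hplus k lam Z. f r) \<le> K * Prob k z (Hk k lam Z))"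
proof -
  obtain \<rho> where \<rho>: "\<rho> > 1" "\<forall>i<k. \<rho> \<le> mu i / lam i"
    using finite_lower_bound_gt[of k 1 "\<lambda>i. mu i / lam i"] lam lam_mu by auto
  define t where "t = sqrt \<rho>"
  have t: "t > 1" "\<forall>i<k. t * t * lam i \<le> mu i"
    using \<rho> lam by (auto simp: t_def pos_le_divide_eq)
  obtain A where A: "A \<ge> 0" "\<forall>n. (1 + Lam k lam + Lam k lam * real n) powr C \<le> A * t ^ n"
    using powr_le_const_mult_power[OF _ t(1) C] Lam_pos[OF k lam] by (meson less_imp_le)
  show ?thesis
    using Hplus_weighted_sum_le[OF k lam _ t C A]
    by (intro exI[of _ "A * (1 / (1 - 1/t)) ^ k"])
       (auto simp: Let_def poisson_wt_def[symmetric] less_le_trans[OF zero_less_one])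
qed

section \<open>The tilted lower tail\<close>

lemma Hminus_ascent_step:
  assumes k: "k \<ge> 1" and lam: "\<forall>i<k. lam i > 0" and z: "\<forall>i<k. z i > 0"
    and \<theta>: "\<theta> \<ge> 0" "\<forall>i<k. \<theta> * \<theta> * mu i \<le> lam i * exp (lam i)"
    and Z: "Z = (\<Sum>i<k. mu i * z i)" and large: "real k * Lam k lam \<le> (\<theta> - 1) * Z"
    and rZ: "lin k lam r \<le> Z - Lam k lam"
  shows "\<exists>i<k. lin k lam (r(i := Suc (r i))) = lin k lam r + lam i \<and>
           \<theta> * (exp (lin k lam r) * poisson_wt k z r)
             \<le> exp (lin k lam (r(i := Suc (r i)))) * poisson_wt k z (r(i := Suc (r i)))"
proof -
  define La where "La = Lam k lam"
  have La: "La > 0" "\<forall>i<k. lam i \<le> La"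
    using Lam_pos[OF k lam] lam_le_Lam unfolding La_def by auto
  have "\<not> (\<forall>i<k. \<theta> * mu i * z i < lam i * (real (r i) + 1))"
  proof
    assume less: "\<forall>i<k. \<theta> * mu i * z i < lam i * (real (r i) + 1)"
    have "\<theta> * Z = (\<Sum>i<k. \<theta> * mu i * z i)" unfolding Z by (simp add: sum_distrib_left mult_ac)
    also have "\<dots> < (\<Sum>i<k. lam i * (real (r i) + 1))"
      using less k by (intro sum_strict_mono) (auto simp: lessThan_empty_iff)
    also have "\<dots> = lin k lam r + (\<Sum>i<k. lam i)"
      unfolding lin_def by (simp add: algebra_simps sum.distrib)
    also have "(\<Sum>i<k. lam i) \<le> real k * La" using sum_mono[of "{..<k}" lam "\<lambda>_. La"] La(2) by simp
    finally show False using rZ large La(1) by (simp add: La_def algebra_simps)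
  qed
  then obtain i where i: "i < k" "lam i * (real (r i) + 1) \<le> \<theta> * mu i * z i"
    by (auto simp: not_less)
  have lam_i: "0 < lam i" and z_i: "0 < z i" and \<theta>_i: "\<theta> * \<theta> * mu i \<le> lam i * exp (lam i)"
    using lam z \<theta>(2) i(1) by auto
  have "lam i * (\<theta> * (real (r i) + 1)) \<le> \<theta> * (\<theta> * mu i * z i)"
    using i(2) \<theta>(1) by (simp add: mult_left_mono mult_ac)
  also have "\<dots> \<le> lam i * (exp (lam i) * z i)"
    using mult_right_mono[OF \<theta>_i less_imp_le[OF z_i]] by (simp add: mult_ac)
  finally have "\<theta> * real (Suc (r i)) \<le> exp (lam i) * z i" using lam_i by (simp add: add.commute)
  moreover have "\<forall>j<k. 0 \<le> z j" using z by (simp add: less_imp_le)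
  ultimately have "\<theta> * (exp (lin k lam r) * poisson_wt k z r)
      \<le> exp (lin k lam (r(i := Suc (r i)))) * poisson_wt k z (r(i := Suc (r i)))"
    by (intro tilted_poisson_fun_upd_Suc_ge[OF i(1)])
  then show ?thesis using lin_fun_upd_Suc[OF i(1), of lam r "r i"] i(1) by auto
qed

lemma Hminus_ascends_to_Hk:
  assumes k: "k \<ge> 1" and lam: "\<forall>i<k. lam i > 0" and z: "\<forall>i<k. z i > 0"
    and \<theta>: "\<theta> \<ge> 0" "\<forall>i<k. \<theta> * \<theta> * mu i \<le> lam i * exp (lam i)"
    and Z: "Z = (\<Sum>i<k. mu i * z i)" and large: "real k * Lam k lam \<le> (\<theta> - 1) * Z"
    and r: "r \<in> Hminus k lam Z"
  shows "\<exists>h\<in>Hk k lam Z. (\<forall>i<k. r i \<le> h i) \<and>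
           \<theta> ^ (\<Sum>i<k. h i - r i) * (exp (lin k lam r) * poisson_wt k z r)
             \<le> exp (lin k lam h) * poisson_wt k z h"
proof -
  obtain lmin where lmin: "lmin > 0" "\<forall>i<k. lmin \<le> lam i"
    using finite_lower_bound_gt[OF lam] by blast
  have "(\<Sum>i<k. r i) \<le> nat \<lfloor>Z / lmin\<rfloor>" if "r \<in> Hminus k lam Z" for r
  proof (rule le_nat_floor)
    have "lmin * real (\<Sum>i<k. r i) \<le> Z"
      using lin_ge_mult_sum[OF lmin(2)] that by (auto simp: Hminus_def intro: order_trans)
    then show "real (\<Sum>i<k. r i) \<le> Z / lmin" using lmin(1) by (simp add: field_simps)
  qed
  moreover have "\<exists>i<k. r(i := Suc (r i)) \<in> Hminus k lam Z \<and>
      \<theta> * (exp (lin k lam r) * poisson_wt k z r)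
        \<le> exp (lin k lam (r(i := Suc (r i)))) * poisson_wt k z (r(i := Suc (r i)))"
    if "r \<in> Hminus k lam Z" "r \<notin> Hk k lam Z" for r
  proof -
    from that have rL: "r \<in> lattice_pts k" and rZ: "lin k lam r \<le> Z - Lam k lam"
      unfolding Hminus_def Hk_def by auto
    then obtain i where i: "i < k" "lin k lam (r(i := Suc (r i))) = lin k lam r + lam i"
      and "\<theta> * (exp (lin k lam r) * poisson_wt k z r)
             \<le> exp (lin k lam (r(i := Suc (r i)))) * poisson_wt k z (r(i := Suc (r i)))"
      using Hminus_ascent_step[OF k lam z \<theta> Z large] by blast
    moreover have "r(i := Suc (r i)) \<in> Hminus k lam Z"
      using i rZ lam_le_Lam[OF i(1), of lam] rL unfolding Hminus_def
      by (auto intro: fun_upd_in_lattice_pts)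
    ultimately show ?thesis by blast
  qed
  ultimately show ?thesis by (rule lattice_ascent[OF \<theta>(1) _ _ r])
qed

lemma Hminus_term_le:
  assumes k: "k \<ge> 1" and lam: "\<forall>i<k. lam i > 0" and z: "\<forall>i<k. z i > 0"
    and t: "t > 1" "\<forall>i<k. (t * t) * (t * t) * mu i \<le> lam i * exp (lam i)" and C: "C \<ge> 0"
    and A: "A \<ge> 0" "\<forall>n. (1 + Lam k lam + Lam k lam * real n) powr C \<le> A * t ^ n"
    and Z: "Z = (\<Sum>i<k. mu i * z i)" and large: "real k * Lam k lam \<le> (t * t - 1) * Z"
    and r: "r \<in> Hminus k lam Z"
  shows "\<exists>h\<in>Hk k lam Z. (\<forall>i<k. r i \<le> h i) \<and>
           (1 + Z - lin k lam r) powr C * (exp (lin k lam r) * poisson_wt k z r)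
             \<le> A * (1/t) ^ (\<Sum>i<k. h i - r i) * (exp Z * poisson_wt k z h)"
proof -
  have z0: "\<forall>i<k. 0 \<le> z i" using z by (simp add: less_imp_le)
  define La where "La = Lam k lam"
  have La: "La > 0" "\<forall>i<k. lam i \<le> La"
    using Lam_pos[OF k lam] lam_le_Lam unfolding La_def by auto
  obtain h where h: "h \<in> Hk k lam Z" "\<forall>i<k. r i \<le> h i"
    and hW: "(t * t) ^ (\<Sum>i<k. h i - r i) * (exp (lin k lam r) * poisson_wt k z r)
               \<le> exp (lin k lam h) * poisson_wt k z h"
    using Hminus_ascends_to_Hk[OF k lam z _ t(2) Z large r] t(1) by auto
  define s where "s = (\<Sum>i<k. h i - r i)"
  have hZ: "Z - La < lin k lam h" "lin k lam h \<le> Z" using h(1) by (auto simp: Hk_def La_def)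
  have "lin k lam h - lin k lam r \<le> La * real s" unfolding s_def using lin_diff_le h(2) La(2) by blast
  then have "(1 + Z - lin k lam r) powr C \<le> (1 + La + La * real s) powr C"
    using r hZ C by (intro powr_mono2) (auto simp: Hminus_def)
  also have "\<dots> \<le> A * t ^ s" using A(2) unfolding La_def by blast
  finally have "(1 + Z - lin k lam r) powr C * (exp (lin k lam r) * poisson_wt k z r)
      \<le> A * t ^ s * (exp (lin k lam r) * poisson_wt k z r)"
    using z0 by (intro mult_right_mono mult_nonneg_nonneg poisson_wt_nonneg) auto
  also have "\<dots> = A * (1/t) ^ s * ((t * t) ^ s * (exp (lin k lam r) * poisson_wt k z r))"
    using t(1) by (simp add: power_mult_distrib power_one_over)
  also have "\<dots> \<le> A * (1/t) ^ s * (exp (lin k lam h) * poisson_wt k z h)"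
    using hW A(1) t(1) unfolding s_def by (intro mult_left_mono) auto
  also have "\<dots> \<le> A * (1/t) ^ s * (exp Z * poisson_wt k z h)"
    using hZ(2) A(1) t(1) z0 by (intro mult_left_mono mult_right_mono poisson_wt_nonneg) auto
  finally show ?thesis using h unfolding s_def by blast
qed

lemma Hminus_weighted_sum_le_large:
  assumes k: "k \<ge> 1" and lam: "\<forall>i<k. lam i > 0" and z: "\<forall>i<k. z i > 0"
    and t: "t > 1" "\<forall>i<k. (t * t) * (t * t) * mu i \<le> lam i * exp (lam i)" and C: "C \<ge> 0"
    and A: "A \<ge> 0" "\<forall>n. (1 + Lam k lam + Lam k lam * real n) powr C \<le> A * t ^ n"
    and Z: "Z = (\<Sum>i<k. mu i * z i)" and large: "real k * Lam k lam \<le> (t * t - 1) * Z"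
  shows "(\<lambda>r. (1 + Z - lin k lam r) powr C * (exp (lin k lam r) * poisson_wt k z r))
           summable_on Hminus k lam Z \<and>
         (\<Sum>\<^sub>\<infinity>r\<in>Hminus k lam Z. (1 + Z - lin k lam r) powr C * (exp (lin k lam r) * poisson_wt k z r))
           \<le> A * (1 / (1 - 1/t)) ^ k * exp Z * Prob k z (Hk k lam Z)"
proof -
  have z0: "\<forall>i<k. 0 \<le> z i" using z by (simp add: less_imp_le)
  have P_summable: "poisson_wt k z summable_on Hk k lam Z"
    using z0 by (rule poisson_wt_summable_on) (auto simp: Hk_def)
  have "(\<lambda>r. (1 + Z - lin k lam r) powr C * (exp (lin k lam r) * poisson_wt k z r))
           summable_on Hminus k lam Z \<and>
         (\<Sum>\<^sub>\<infinity>r\<in>Hminus k lam Z. (1 + Z - lin k lam r) powr C * (exp (lin k lam r) * poisson_wt k z r))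
           \<le> A * (1 / (1 - 1/t)) ^ k * (\<Sum>\<^sub>\<infinity>h\<in>Hk k lam Z. exp Z * poisson_wt k z h)"
  proof (rule geometric_decomposition_infsum_le[where comb="\<lambda>h d. restrict (\<lambda>j. h j - d j) {..<k}"])
    show "t > 1" "A \<ge> 0" by (fact t(1) A(1))+
    show "0 \<le> (1 + Z - lin k lam r) powr C * (exp (lin k lam r) * poisson_wt k z r)"
      "0 \<le> exp Z * poisson_wt k z r" for r
      using z0 by (simp_all add: poisson_wt_nonneg)
    show "(\<lambda>h. exp Z * poisson_wt k z h) summable_on Hk k lam Z"
      using P_summable by (rule summable_on_cmult_right)
    fix r assume r: "r \<in> Hminus k lam Z"
    then obtain h where h: "h \<in> Hk k lam Z" "\<forall>i<k. r i \<le> h i"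
      and bound: "(1 + Z - lin k lam r) powr C * (exp (lin k lam r) * poisson_wt k z r)
                    \<le> A * (1/t) ^ (\<Sum>i<k. h i - r i) * (exp Z * poisson_wt k z h)"
      using Hminus_term_le[OF k lam z t C A Z large] by blast
    define d where "d = restrict (\<lambda>j. h j - r j) {..<k}"
    have "r = restrict (\<lambda>j. h j - d j) {..<k}"
      using h(2) r by (intro lattice_pts_eq_restrictI) (auto simp: d_def Hminus_def)
    moreover have "(\<Sum>i<k. d i) = (\<Sum>i<k. h i - r i)" by (simp add: d_def)
    moreover have "d \<in> lattice_pts k" unfolding d_def by (rule restrict_in_lattice_pts)
    ultimately show "\<exists>h\<in>Hk k lam Z. \<exists>d\<in>lattice_pts k. r = restrict (\<lambda>j. h j - d j) {..<k} \<and>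
        (1 + Z - lin k lam r) powr C * (exp (lin k lam r) * poisson_wt k z r)
          \<le> A * (1/t) ^ (\<Sum>i<k. d i) * (exp Z * poisson_wt k z h)"
      using h(1) bound by (intro bexI[of _ h] bexI[of _ d] conjI) auto
  qed
  then show ?thesis
    by (simp add: Prob_def infsum_cmult_right[OF P_summable] mult_ac)
qed

lemma Prob_Hk_ge:
  assumes k: "k \<ge> 1" and lam: "\<forall>i<k. lam i > 0" and z: "\<forall>i<k. z i \<ge> 1"
    and lmin: "lmin > 0" "\<forall>i<k. lmin \<le> lam i" and mmin: "mmin > 0" "\<forall>i<k. mmin \<le> mu i"
    and Z: "Z = (\<Sum>i<k. mu i * z i)" "Lam k lam \<le> Z" "Z \<le> Z0"
  shows "exp (- (Z0 / mmin)) / fact (nat \<lfloor>Z0 / lmin\<rfloor>) ^ k \<le> Prob k z (Hk k lam Z)"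
proof -
  define M where "M = nat \<lfloor>Z0 / lmin\<rfloor>"
  have z0: "\<forall>i<k. 0 \<le> z i" using z by (auto intro: order_trans[of 0 1])
  obtain h where h: "h \<in> Hk k lam Z" using Hk_nonempty[OF k lam Z(2)] by blast
  have "lmin * real (\<Sum>i<k. h i) \<le> Z0"
    using lin_ge_mult_sum[OF lmin(2), of h] h Z(3) by (auto simp: Hk_def)
  then have "(\<Sum>i<k. h i) \<le> M" unfolding M_def using lmin(1) by (intro le_nat_floor) (simp add: field_simps)
  moreover have "h i \<le> (\<Sum>i<k. h i)" if "i < k" for i
    using that by (intro member_le_sum) auto
  ultimately have hM: "\<forall>i<k. h i \<le> M" using order_trans by blast
  have "mmin * (\<Sum>i<k. z i) \<le> Z"
    unfolding Z(1) sum_distrib_left using mmin(2) z0 by (intro sum_mono mult_right_mono) auto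
  then have "exp (- (Z0 / mmin)) \<le> exp (- (\<Sum>i<k. z i))"
    using Z(3) mmin(1) by (simp add: field_simps)
  then have "exp (- (Z0 / mmin)) / fact M ^ k \<le> poisson_wt k z h"
    using order_trans[OF divide_right_mono poisson_wt_ge[OF z hM]] by simp
  also have "\<dots> \<le> Prob k z (Hk k lam Z)"
    unfolding Prob_def using h z0
    by (intro finite_sum_le_infsum[of _ _ "{h}", simplified] poisson_wt_summable_on poisson_wt_nonneg)
       (auto simp: Hk_def)
  finally show ?thesis unfolding M_def .
qed

lemma Hminus_weighted_sum_le_small:
  assumes k: "k \<ge> 1" and lam: "\<forall>i<k. lam i > 0" and z: "\<forall>i<k. z i \<ge> 1"
    and lmin: "lmin > 0" "\<forall>i<k. lmin \<le> lam i" and mmin: "mmin > 0" "\<forall>i<k. mmin \<le> mu i"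
    and C: "C \<ge> 0" and Z: "Z = (\<Sum>i<k. mu i * z i)" "Lam k lam \<le> Z" "Z \<le> Z0"
  shows "(\<lambda>r. (1 + Z - lin k lam r) powr C * (exp (lin k lam r) * poisson_wt k z r))
           summable_on Hminus k lam Z \<and>
         (\<Sum>\<^sub>\<infinity>r\<in>Hminus k lam Z. (1 + Z - lin k lam r) powr C * (exp (lin k lam r) * poisson_wt k z r))
           \<le> (1 + Z0) powr C * exp Z0 * exp (Z0 / mmin) * fact (nat \<lfloor>Z0 / lmin\<rfloor>) ^ k
              * exp Z * Prob k z (Hk k lam Z)"
proof -
  define g where "g r = (1 + Z - lin k lam r) powr C * (exp (lin k lam r) * poisson_wt k z r)" for r
  define D where "D = (1 + Z0) powr C * exp Z0"
  define M where "M = nat \<lfloor>Z0 / lmin\<rfloor>"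
  have z0: "\<forall>i<k. 0 \<le> z i" using z by (auto intro: order_trans[of 0 1])
  have lam0: "\<forall>i<k. 0 \<le> lam i" using lam by (simp add: less_imp_le)
  have P_summable: "poisson_wt k z summable_on Hminus k lam Z"
    using z0 by (rule poisson_wt_summable_on) (auto simp: Hminus_def)
  have g_le: "g r \<le> D * poisson_wt k z r" if "r \<in> Hminus k lam Z" for r
  proof -
    have rZ: "lin k lam r \<le> Z" and lin0: "0 \<le> lin k lam r"
      using that lin_nonneg[OF lam0] by (auto simp: Hminus_def)
    have "(1 + Z - lin k lam r) powr C \<le> (1 + Z0) powr C"
      using rZ lin0 Z(3) C by (intro powr_mono2) auto
    moreover have "exp (lin k lam r) \<le> exp Z0" using rZ Z(3) by simp
    ultimately show ?thesis
      unfolding g_def D_def using z0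
      by (simp add: mult_mono poisson_wt_nonneg mult.assoc)
  qed
  have g_summable: "g summable_on Hminus k lam Z"
    using z0 g_le
    by (intro summable_on_comparison_test[OF summable_on_cmult_right[OF P_summable, of D]])
       (simp_all add: g_def poisson_wt_nonneg)
  have "infsum g (Hminus k lam Z) \<le> infsum (\<lambda>r. D * poisson_wt k z r) (Hminus k lam Z)"
    by (intro infsum_mono g_summable summable_on_cmult_right P_summable g_le)
  also have "\<dots> \<le> D * 1"
    using sum_poisson_wt_le_1[OF z0] P_summable unfolding infsum_cmult_right'
    by (intro mult_left_mono infsum_le_finite_sums) (auto simp: Hminus_def D_def)
  also have "D * 1 = D * exp (Z0 / mmin) * fact M ^ k * (exp (- (Z0 / mmin)) / fact M ^ k)"
    by (simp add: exp_minus field_simps)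
  also have "\<dots> \<le> D * exp (Z0 / mmin) * fact M ^ k * Prob k z (Hk k lam Z)"
    using Prob_Hk_ge[OF k lam z lmin mmin Z] unfolding M_def by (intro mult_left_mono) (simp_all add: D_def)
  also have "\<dots> \<le> D * exp (Z0 / mmin) * fact M ^ k * (exp Z * Prob k z (Hk k lam Z))"
  proof (intro mult_left_mono)
    have "1 \<le> exp Z" using Lam_pos[OF k lam] Z(2) by simp
    moreover have "0 \<le> Prob k z (Hk k lam Z)"
      unfolding Prob_def using z0 by (intro infsum_nonneg poisson_wt_nonneg)
    ultimately show "Prob k z (Hk k lam Z) \<le> exp Z * Prob k z (Hk k lam Z)"
      using mult_right_mono by fastforce
  qed (simp add: D_def)
  finally show ?thesis
    using g_summable unfolding g_def[abs_def] D_def M_def by (simp add: mult_ac)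
qed

lemma Hminus_weighted_sum_le:
  assumes k: "k \<ge> 1" and lam: "\<forall>i<k. lam i > 0" and z: "\<forall>i<k. z i \<ge> 1"
    and t: "t > 1" "\<forall>i<k. (t * t) * (t * t) * mu i \<le> lam i * exp (lam i)" and C: "C \<ge> 0"
    and A: "A \<ge> 0" "\<forall>n. (1 + Lam k lam + Lam k lam * real n) powr C \<le> A * t ^ n"
    and lmin: "lmin > 0" "\<forall>i<k. lmin \<le> lam i" and mmin: "mmin > 0" "\<forall>i<k. mmin \<le> mu i"
    and Z: "Z = (\<Sum>i<k. mu i * z i)" "Lam k lam \<le> Z"
    and Z0: "Z0 = real k * Lam k lam / (t * t - 1)"
  shows "(\<lambda>r. (1 + Z - lin k lam r) powr C * (exp (lin k lam r) * poisson_wt k z r))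
           summable_on Hminus k lam Z \<and>
         (\<Sum>\<^sub>\<infinity>r\<in>Hminus k lam Z. (1 + Z - lin k lam r) powr C * (exp (lin k lam r) * poisson_wt k z r))
           \<le> (A * (1 / (1 - 1/t)) ^ k
               + (1 + Z0) powr C * exp Z0 * exp (Z0 / mmin) * fact (nat \<lfloor>Z0 / lmin\<rfloor>) ^ k)
             * exp Z * Prob k z (Hk k lam Z)"
proof -
  define c where "c = 1 / (1 - 1/t)"
  define B where "B = (1 + Z0) powr C * exp Z0 * exp (Z0 / mmin) * fact (nat \<lfloor>Z0 / lmin\<rfloor>) ^ k"
  have z0: "\<forall>i<k. z i > 0" using z by (auto intro: less_le_trans[OF zero_less_one])
  have eZP: "0 \<le> exp Z * Prob k z (Hk k lam Z)"
    unfolding Prob_def using z0 by (simp add: infsum_nonneg poisson_wt_nonneg less_imp_le)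
  have X_le: "X \<le> A * c ^ k + B" if "X = A * c ^ k \<or> X = B" for X
    using that A(1) t(1) by (auto simp: B_def c_def)
  have mono: "X * exp Z * Prob k z (Hk k lam Z)
      \<le> (A * c ^ k + B) * exp Z * Prob k z (Hk k lam Z)" if "X = A * c ^ k \<or> X = B" for X
    using mult_right_mono[OF X_le[OF that] eZP] by (simp only: mult.assoc)
  have "0 < t * t - 1" using t(1) by (simp add: one_less_power[of t 2, simplified power2_eq_square])
  then have "real k * Lam k lam \<le> (t * t - 1) * Z \<or> Z \<le> Z0"
    unfolding Z0 by (fastforce simp: field_simps)
  then show ?thesis
  proof
    assume "real k * Lam k lam \<le> (t * t - 1) * Z"
    with Hminus_weighted_sum_le_large[OF k lam z0 t C A Z(1)] mono[of "A * c ^ k"] show ?thesis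
      unfolding B_def c_def by (meson order_trans)
  next
    assume "Z \<le> Z0"
    with Hminus_weighted_sum_le_small[OF k lam z lmin mmin C Z] mono[of B] show ?thesis
      unfolding B_def c_def by (meson order_trans)
  qed
qed

lemma Hminus_bound_uniform:
  fixes k :: nat and C :: real and lam mu :: "nat \<Rightarrow> real"
  assumes k: "k \<ge> 1" and C: "C \<ge> 0" and lam: "\<forall>i<k. lam i > 0" and mu: "\<forall>i<k. mu i > 0"
    and log_ratio: "\<forall>i<k. ln (mu i / lam i) < lam i"
  shows "\<exists>K::real. \<forall>z::nat \<Rightarrow> real.
           (\<forall>i<k. z i \<ge> 1) \<longrightarrow> (\<Sum>i<k. mu i * z i) \<ge> Lam k lam \<longrightarrow>
           (let Z = (\<Sum>i<k. mu i * z i);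
                g = (\<lambda>r. (1 + Z - lin k lam r) powr C *
                         (\<Prod>i<k. exp (- z i) * (exp (lam i) * z i) ^ r i / fact (r i)))
            in g summable_on Hminus k lam Z \<and>
               (\<Sum>\<^sub>\<infinity>r\<in>Hminus k lam Z. g r) \<le> K * exp Z * Prob k z (Hk k lam Z))"
proof -
  have "\<forall>i<k. 1 < lam i * exp (lam i) / mu i"
  proof (intro allI impI)
    fix i assume "i < k"
    then have "mu i / lam i < exp (lam i)"
      using log_ratio lam mu by (metis divide_pos_pos exp_less_cancel_iff exp_ln)
    then show "1 < lam i * exp (lam i) / mu i" using \<open>i < k\<close> lam mu by (simp add: field_simps)
  qed
  then obtain \<rho> where \<rho>: "\<rho> > 1" "\<forall>i<k. \<rho> \<le> lam i * exp (lam i) / mu i"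
    using finite_lower_bound_gt[where f="\<lambda>i. lam i * exp (lam i) / mu i"] by blast
  define t where "t = sqrt (sqrt \<rho>)"
  have t: "t > 1" "\<forall>i<k. (t * t) * (t * t) * mu i \<le> lam i * exp (lam i)"
    using \<rho> mu by (auto simp: t_def pos_le_divide_eq)
  obtain A where A: "A \<ge> 0" "\<forall>n. (1 + Lam k lam + Lam k lam * real n) powr C \<le> A * t ^ n"
    using powr_le_const_mult_power[OF _ t(1) C] Lam_pos[OF k lam] by (meson less_imp_le)
  obtain lmin where lmin: "lmin > 0" "\<forall>i<k. lmin \<le> lam i"
    using finite_lower_bound_gt[OF lam] by blast
  obtain mmin where mmin: "mmin > 0" "\<forall>i<k. mmin \<le> mu i"
    using finite_lower_bound_gt[OF mu] by blast
  show ?thesis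
    unfolding Let_def tilted_poisson_eq
    by (intro exI allI impI, rule Hminus_weighted_sum_le[OF k lam _ t C A lmin mmin refl _ refl])
qed

theorem lemma4p3:
  fixes k :: nat and C :: real and lam mu :: "nat \<Rightarrow> real"
  assumes "k \<ge> 1" and "C \<ge> 0"
    and "\<forall>i<k. lam i > 0" and "\<forall>i<k. mu i > 0"
  shows
   "((\<forall>i<k. lam i < mu i) \<longrightarrow>
      (\<exists>K::real. \<forall>z::nat \<Rightarrow> real.
         (\<forall>i<k. z i \<ge> 1) \<longrightarrow> (\<Sum>i<k. mu i * z i) \<ge> Lam k lam \<longrightarrow>
         (let Z = (\<Sum>i<k. mu i * z i);
              f = (\<lambda>r. (1 + lin k lam r - Z) powr C * (\<Prod>i<k. exp (- z i) * z i ^ r i / fact (r i)))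
          in f summable_on Hplus k lam Z \<and>
             (\<Sum>\<^sub>\<infinity>r\<in>Hplus k lam Z. f r) \<le> K * Prob k z (Hk k lam Z))))
    \<and>
    ((\<forall>i<k. ln (mu i / lam i) < lam i) \<longrightarrow>
      (\<exists>K::real. \<forall>z::nat \<Rightarrow> real.
         (\<forall>i<k. z i \<ge> 1) \<longrightarrow> (\<Sum>i<k. mu i * z i) \<ge> Lam k lam \<longrightarrow>
         (let Z = (\<Sum>i<k. mu i * z i);
              g = (\<lambda>r. (1 + Z - lin k lam r) powr C * (\<Prod>i<k. exp (- z i) * (exp (lam i) * z i) ^ r i / fact (r i)))
          in g summable_on Hminus k lam Z \<and>
             (\<Sum>\<^sub>\<infinity>r\<in>Hminus k lam Z. g r) \<le> K * exp Z * Prob k z (Hk k lam Z))))"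
  using Hplus_bound_uniform[OF assms(1-3)] Hminus_bound_uniform[OF assms] by blast

end
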